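(* Let $\mathcal{L} \subset \mathbb{R}^n$ be a stable full-rank lattice such that every decomposition $\mathcal{L} \cong \mathcal{L}_1 \oplus \mathcal{L}_2$ with $\mathcal{L}_2$ non-trivial and indecomposable has $\mathrm{rank}(\mathcal{L}_2) = 1$. Then $\mathcal{L} \cong \mathbb{Z}^n$.
   Context: A lattice of rank $d$ is the set of integer combinations of $d$ linearly independent vectors $\mathbf{B}\in\mathbb{R}^{n\times d}$; $\det(\mathcal{L})=\sqrt{\det(\mathbf{B}^T\mathbf{B})}$, $\det(\{\vec 0\}):=1$. A sublattice is any additive subgroup. A lattice $\mathcal{L}$ is stable if $\det(\mathcal{L}) = 1$ and $\det(\mathcal{L}') \geq 1$ for all sublattices $\mathcal{L}' \subseteq \mathcal{L}$. The direct sum $\oplus$ of lattices is the orthogonal direct sum; $\cong$ means isomorphic via a linear isometry. A lattice is decomposable if it is isomorphic to a direct sum of non-trivial lattices of strictly lower rank, and indecomposable otherwise; $\mathcal{L}_1$ may be the trivial lattice $\{\vec 0\}$. *)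

theory Defs
  imports "HOL-Analysis.Analysis"
begin

definition lattice_basis :: "'a::euclidean_space list \<Rightarrow> 'a set \<Rightarrow> bool" where
  "lattice_basis bs L \<longleftrightarrow> distinct bs \<and> independent (set bs) \<and>
     L = {\<Sum>i<length bs. c i *\<^sub>R bs ! i | c. \<forall>i<length bs. c i \<in> \<int>}"

definition is_lattice :: "'a::euclidean_space set \<Rightarrow> bool" where
  "is_lattice L \<longleftrightarrow> (\<exists>bs. lattice_basis bs L)"

definition lattice_rank :: "'a::euclidean_space set \<Rightarrow> nat" where
  "lattice_rank L = dim L"

definition det_fin :: "nat \<Rightarrow> (nat \<Rightarrow> nat \<Rightarrow> real) \<Rightarrow> real" where
  "det_fin d G = (\<Sum>p | p permutes {..<d}. of_int (sign p) * (\<Prod>i<d. G i (p i)))"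

definition lattice_det :: "'a::euclidean_space set \<Rightarrow> real" where
  "lattice_det L = (if L = {0} then 1 else
     (let bs = (SOME bs. lattice_basis bs L) in
      sqrt (det_fin (length bs) (\<lambda>i j. inner (bs ! i) (bs ! j)))))"

text \<open>Sublattice = additive subgroup.\<close>
definition additive_subgroup :: "'a::euclidean_space set \<Rightarrow> bool" where
  "additive_subgroup S \<longleftrightarrow> 0 \<in> S \<and> (\<forall>x\<in>S. \<forall>y\<in>S. x + y \<in> S) \<and> (\<forall>x\<in>S. - x \<in> S)"

definition stable_lattice :: "'a::euclidean_space set \<Rightarrow> bool" where
  "stable_lattice L \<longleftrightarrow> is_lattice L \<and> lattice_det L = 1 \<and>
     (\<forall>L'. L' \<subseteq> L \<and> additive_subgroup L' \<longrightarrow> lattice_det L' \<ge> 1)"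

definition lattice_iso :: "'a::euclidean_space set \<Rightarrow> 'b::euclidean_space set \<Rightarrow> bool" where
  "lattice_iso L M \<longleftrightarrow> (\<exists>f::'a \<Rightarrow> 'b. linear f \<and> (\<forall>x\<in>span L. norm (f x) = norm x) \<and> f ` L = M)"

text \<open>Orthogonal direct sum, realised in the product space.\<close>
definition lattice_dsum :: "'a::euclidean_space set \<Rightarrow> 'b::euclidean_space set \<Rightarrow> ('a \<times> 'b) set" where
  "lattice_dsum L1 L2 = L1 \<times> L2"

text \<open>Decomposable: isomorphic to a direct sum of non-trivial lattices of strictly
  lower rank (such lattices can always be realised inside the ambient space of L).\<close>
definition decomposable :: "'a::euclidean_space set \<Rightarrow> bool" where
  "decomposable L \<longleftrightarrow> (\<exists>(M1::'a set) (M2::'a set). is_lattice M1 \<and> is_lattice M2 \<and>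
     M1 \<noteq> {0} \<and> M2 \<noteq> {0} \<and> lattice_rank M1 < lattice_rank L \<and>
     lattice_rank M2 < lattice_rank L \<and> lattice_iso L (lattice_dsum M1 M2))"

definition indecomposable :: "'a::euclidean_space set \<Rightarrow> bool" where
  "indecomposable L \<longleftrightarrow> \<not> decomposable L"

definition int_lattice :: "(real^'n) set" where
  "int_lattice = {x. \<forall>i. x $ i \<in> \<int>}"

end

(*
  Peel off an indecomposable orthogonal summand of minimal rank; by hypothesis it has
  rank one. Repeating this on the complement gives an orthogonal basis v_1, ..., v_n of L.
  Each line Z v_i is a sublattice of determinant |v_i|, so stability gives |v_i| >= 1,
  while det L = |v_1| ... |v_n| = 1. Hence the basis is orthonormal and L is isometric
  to Z^n.
*)
theory Submission
  imports Defs "Jordan_Normal_Form.Determinant"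
begin

section \<open>Lattice bases\<close>

lemma lattice_basis_memI:
  assumes "lattice_basis bs L" "\<forall>i<length bs. c i \<in> \<int>"
  shows "(\<Sum>i<length bs. c i *\<^sub>R bs ! i) \<in> L"
  using assms unfolding lattice_basis_def by auto

lemma lattice_basis_memE:
  assumes "lattice_basis bs L" "x \<in> L"
  obtains c where "\<forall>i<length bs. c i \<in> \<int>" "x = (\<Sum>i<length bs. c i *\<^sub>R bs ! i)"
  using assms unfolding lattice_basis_def by auto

lemma lattice_basis_scaleR_nth_mem:
  assumes "lattice_basis bs L" "i < length bs" "k \<in> \<int>"
  shows "k *\<^sub>R bs ! i \<in> L"
proof -
  have "k *\<^sub>R bs ! i = (\<Sum>j<length bs. (if j = i then k else 0) *\<^sub>R bs ! j)"
    using assms(2) by (simp add: if_distrib[of "\<lambda>c. c *\<^sub>R _"] cong: if_cong)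
  then show ?thesis
    using lattice_basis_memI[OF assms(1), of "\<lambda>j. if j = i then k else 0"] assms(3) by simp
qed

lemma lattice_basis_nth_mem: "lattice_basis bs L \<Longrightarrow> i < length bs \<Longrightarrow> bs ! i \<in> L"
  using lattice_basis_scaleR_nth_mem[of bs L i 1] by simp

lemma lattice_basis_set_subset: "lattice_basis bs L \<Longrightarrow> set bs \<subseteq> L"
  by (auto simp: in_set_conv_nth intro: lattice_basis_nth_mem)

lemma lattice_subset_span_basis: "lattice_basis bs L \<Longrightarrow> L \<subseteq> span (set bs)"
  unfolding lattice_basis_def by (clarify, intro span_sum span_scale span_base) simp

lemma span_lattice_basis: "lattice_basis bs L \<Longrightarrow> span L = span (set bs)"
  by (meson lattice_basis_set_subset lattice_subset_span_basis span_eq span_superset subset_trans)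

lemma dim_lattice_basis: "lattice_basis bs L \<Longrightarrow> dim L = length bs"
proof -
  assume bs: "lattice_basis bs L"
  have "dim L = dim (set bs)"
    using span_lattice_basis[OF bs] by (metis dim_span)
  also have "\<dots> = length bs"
    using bs by (simp add: lattice_basis_def dim_eq_card_independent distinct_card)
  finally show ?thesis .
qed

lemma lattice_basis_Nil: "lattice_basis [] {0}"
  by (simp add: lattice_basis_def independent_empty)

lemma additive_subgroup_lattice:
  assumes bs: "lattice_basis bs L"
  shows "additive_subgroup L"
  unfolding additive_subgroup_def
proof (intro conjI ballI)
  show "0 \<in> L"
    using lattice_basis_memI[OF bs, of "\<lambda>_. 0"] by simp
next
  fix x y assume "x \<in> L" "y \<in> L"
  then obtain c d where "\<forall>i<length bs. c i \<in> \<int>" "x = (\<Sum>i<length bs. c i *\<^sub>R bs ! i)"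
    and "\<forall>i<length bs. d i \<in> \<int>" "y = (\<Sum>i<length bs. d i *\<^sub>R bs ! i)"
    using lattice_basis_memE[OF bs] by metis
  then show "x + y \<in> L"
    using lattice_basis_memI[OF bs, of "\<lambda>i. c i + d i"] by (simp add: scaleR_add_left sum.distrib)
next
  fix x assume "x \<in> L"
  then obtain c where "\<forall>i<length bs. c i \<in> \<int>" "x = (\<Sum>i<length bs. c i *\<^sub>R bs ! i)"
    using lattice_basis_memE[OF bs] by metis
  then show "- x \<in> L"
    using lattice_basis_memI[OF bs, of "\<lambda>i. - c i"] by (simp add: sum_negf)
qed

lemma zero_in_lattice: "is_lattice L \<Longrightarrow> 0 \<in> L"
  using additive_subgroup_lattice additive_subgroup_def is_lattice_def by blast

lemma sum_nth_if_in_span: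
  assumes "distinct bs" "x \<in> span (set bs)"
  obtains c where "x = (\<Sum>i<length bs. c i *\<^sub>R bs ! i)"
proof -
  obtain u where u: "x = (\<Sum>v\<in>set bs. u v *\<^sub>R v)"
    using assms(2) span_finite[of "set bs"] by auto
  also have "\<dots> = (\<Sum>i<length bs. u (bs ! i) *\<^sub>R bs ! i)"
    by (rule sum.reindex_bij_betw[OF bij_betw_nth[OF assms(1) refl refl], symmetric])
  finally show ?thesis
    by (rule that)
qed

lemma independent_sum_nth_eq_zero:
  assumes "distinct bs" "independent (set bs)" "(\<Sum>i<length bs. c i *\<^sub>R bs ! i) = 0" "i < length bs"
  shows "c i = 0"
proof -
  have bij: "bij_betw ((!) bs) {..<length bs} (set bs)"
    by (rule bij_betw_nth[OF assms(1) refl refl])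
  define u where "u v = c (inv_into {..<length bs} ((!) bs) v)" for v
  have "(\<Sum>v\<in>set bs. u v *\<^sub>R v) = (\<Sum>i<length bs. u (bs ! i) *\<^sub>R bs ! i)"
    by (rule sum.reindex_bij_betw[OF bij, symmetric])
  also have "\<dots> = 0"
    using assms(3) bij by (simp add: u_def bij_betw_def)
  finally have "u (bs ! i) = 0"
    using assms(2,4) independent_explicit_finite_subsets by fastforce
  then show ?thesis
    using assms(4) bij by (simp add: u_def bij_betw_def)
qed

lemma independent_sum_nth_eq:
  assumes "distinct bs" "independent (set bs)"
    and "(\<Sum>i<length bs. c i *\<^sub>R bs ! i) = (\<Sum>i<length bs. d i *\<^sub>R bs ! i)" "i < length bs"
  shows "c i = d i"
proof -
  have "(\<Sum>i<length bs. (c i - d i) *\<^sub>R bs ! i) = 0"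
    using assms(3) by (simp add: scaleR_diff_left sum_subtractf)
  then have "c i - d i = 0"
    by (rule independent_sum_nth_eq_zero[OF assms(1,2) _ assms(4)])
  then show ?thesis
    by simp
qed

lemma lattice_basis_map:
  assumes "lattice_basis bs L" "linear h" "inj_on h (span L)"
  shows "lattice_basis (map h bs) (h ` L)"
proof -
  have inj: "inj_on h (span (set bs))"
    using assms(1,3) span_lattice_basis by metis
  have "distinct (map h bs)"
    using assms(1) inj span_superset by (auto simp: distinct_map lattice_basis_def intro: inj_on_subset)
  moreover have "independent (set (map h bs))"
    using linear_independent_injective_image[OF assms(2)] assms(1) inj
    by (simp add: lattice_basis_def)
  moreover have hsum: "h (\<Sum>i<length bs. c i *\<^sub>R bs ! i) = (\<Sum>i<length bs. c i *\<^sub>R map h bs ! i)" for c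
    using assms(2) by (simp add: linear_sum linear_scale)
  have "h ` L = {\<Sum>i<length bs. c i *\<^sub>R map h bs ! i | c. \<forall>i<length bs. c i \<in> \<int>}"
  proof (intro equalityI subsetI)
    fix y assume "y \<in> h ` L"
    then obtain x where x: "x \<in> L" "y = h x"
      by blast
    obtain c where "\<forall>i<length bs. c i \<in> \<int>" "x = (\<Sum>i<length bs. c i *\<^sub>R bs ! i)"
      by (rule lattice_basis_memE[OF assms(1) x(1)])
    then show "y \<in> {\<Sum>i<length bs. c i *\<^sub>R map h bs ! i | c. \<forall>i<length bs. c i \<in> \<int>}"
      using x(2) hsum by blast
  next
    fix y assume "y \<in> {\<Sum>i<length bs. c i *\<^sub>R map h bs ! i | c. \<forall>i<length bs. c i \<in> \<int>}"
    then obtain c where c: "\<forall>i<length bs. c i \<in> \<int>" "y = (\<Sum>i<length bs. c i *\<^sub>R map h bs ! i)"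
      by blast
    have "(\<Sum>i<length bs. c i *\<^sub>R bs ! i) \<in> L"
      by (rule lattice_basis_memI[OF assms(1) c(1)])
    then show "y \<in> h ` L"
      unfolding c(2) hsum[symmetric] by (rule imageI)
  qed
  ultimately show ?thesis
    unfolding lattice_basis_def by simp
qed

lemma lattice_basis_eq_Nil_iff: "lattice_basis bs L \<Longrightarrow> L = {0} \<longleftrightarrow> bs = []"
  using dim_lattice_basis[OF lattice_basis_Nil] dim_lattice_basis[of bs L]
  by (auto simp: lattice_basis_def)

lemma lattice_rank_one_basis:
  assumes "is_lattice B" "lattice_rank B = 1"
  obtains v where "lattice_basis [v] B"
proof -
  obtain bs where bs: "lattice_basis bs B"
    using assms(1) unfolding is_lattice_def by blast
  then have "length bs = 1"
    using assms(2) dim_lattice_basis[OF bs] by (simp add: lattice_rank_def)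
  then show thesis
    using bs that by (cases bs) auto
qed

section \<open>Orthogonal sums\<close>

text \<open>An internal orthogonal sum of lattices \<open>X\<close> and \<open>Y\<close> is the Minkowski sum \<open>X + Y\<close>
  (from \<^theory>\<open>HOL-Library.Set_Algebras\<close>) of orthogonal lattices.\<close>

definition orthogonal_sets :: "'a::real_inner set \<Rightarrow> 'a set \<Rightarrow> bool" where
  "orthogonal_sets X Y \<longleftrightarrow> (\<forall>x\<in>X. \<forall>y\<in>Y. inner x y = 0)"

lemma orthogonal_sets_sym: "orthogonal_sets X Y \<Longrightarrow> orthogonal_sets Y X"
  unfolding orthogonal_sets_def by (metis inner_commute)

lemma orthogonal_sets_mono: "orthogonal_sets X Y \<Longrightarrow> X' \<subseteq> X \<Longrightarrow> Y' \<subseteq> Y \<Longrightarrow> orthogonal_sets X' Y'"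
  unfolding orthogonal_sets_def by blast

lemma orthogonal_sets_plus_left:
  "orthogonal_sets X Z \<Longrightarrow> orthogonal_sets Y Z \<Longrightarrow> orthogonal_sets (X + Y) Z"
  unfolding orthogonal_sets_def by (auto simp: set_plus_def inner_add_left)

lemma orthogonal_sets_plus_right:
  "orthogonal_sets X Y \<Longrightarrow> orthogonal_sets X Z \<Longrightarrow> orthogonal_sets X (Y + Z)"
  by (meson orthogonal_sets_plus_left orthogonal_sets_sym)

lemma orthogonal_sets_span:
  assumes "orthogonal_sets X Y" "x \<in> span X" "y \<in> span Y"
  shows "inner x y = 0"
proof -
  have *: "inner x y = 0" if "y \<in> Y" for y
    by (rule span_induct[OF assms(2) subspace_hyperplane2])
      (use assms(1) that in \<open>simp add: orthogonal_sets_def\<close>)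
  show ?thesis
    by (rule span_induct[OF assms(3) subspace_hyperplane]) (rule *)
qed

lemma independent_Un_orthogonal:
  fixes S T :: "'a::euclidean_space set"
  assumes S: "independent S" and T: "independent T" and ST: "orthogonal_sets S T"
  shows "independent (S \<union> T)" "S \<inter> T = {}"
proof -
  show disjoint: "S \<inter> T = {}"
  proof (rule ccontr)
    assume "S \<inter> T \<noteq> {}"
    then obtain x where "x \<in> S" "x \<in> T" by blast
    then have "inner x x = 0"
      using ST by (simp add: orthogonal_sets_def)
    then have "x = 0"
      by simp
    then show False
      using S \<open>x \<in> S\<close> dependent_zero by blast
  qed
  have fin: "finite S" "finite T"
    using S T independent_imp_finite by blast+
  have "card (S \<union> T) = dim S + dim T"
    using S T fin disjoint by (simp add: card_Un_disjoint dim_eq_card_independent)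
  also have "\<dots> = dim (S \<union> T)"
    using ST by (simp add: orthogonal_sets_def dim_orthogonal_sum)
  finally show "independent (S \<union> T)"
    using card_eq_dim[of "S \<union> T" "S \<union> T"] fin by (simp add: span_superset)
qed

lemma sum_lessThan_add:
  fixes f :: "nat \<Rightarrow> 'a::comm_monoid_add"
  shows "(\<Sum>i<m + k. f i) = (\<Sum>i<m. f i) + (\<Sum>j<k. f (m + j))"
  by (induct k) (simp_all add: add_ac)

lemma lattice_basis_append:
  assumes xs: "lattice_basis xs X" and ys: "lattice_basis ys Y" and XY: "orthogonal_sets X Y"
  shows "lattice_basis (xs @ ys) (X + Y)"
proof -
  have "orthogonal_sets (set xs) (set ys)"
    using XY lattice_basis_set_subset[OF xs] lattice_basis_set_subset[OF ys] by (rule orthogonal_sets_mono)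
  then have indep: "independent (set xs \<union> set ys)" and disjoint: "set xs \<inter> set ys = {}"
    using independent_Un_orthogonal xs ys unfolding lattice_basis_def by blast+
  let ?m = "length xs" and ?k = "length ys"
  have split: "(\<Sum>i<length (xs @ ys). c i *\<^sub>R (xs @ ys) ! i) =
      (\<Sum>i<?m. c i *\<^sub>R xs ! i) + (\<Sum>j<?k. c (?m + j) *\<^sub>R ys ! j)" for c
    by (simp add: sum_lessThan_add nth_append)
  have "X + Y = {\<Sum>i<length (xs @ ys). c i *\<^sub>R (xs @ ys) ! i | c. \<forall>i<length (xs @ ys). c i \<in> \<int>}"
  proof (intro equalityI subsetI)
    fix z assume "z \<in> X + Y"
    then obtain x y where z: "z = x + y" "x \<in> X" "y \<in> Y"
      by (rule set_plus_elim)
    obtain c where c: "\<forall>i<?m. c i \<in> \<int>" "x = (\<Sum>i<?m. c i *\<^sub>R xs ! i)"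
      by (rule lattice_basis_memE[OF xs z(2)])
    obtain d where d: "\<forall>i<?k. d i \<in> \<int>" "y = (\<Sum>i<?k. d i *\<^sub>R ys ! i)"
      by (rule lattice_basis_memE[OF ys z(3)])
    define e where "e i = (if i < ?m then c i else d (i - ?m))" for i
    have "z = (\<Sum>i<length (xs @ ys). e i *\<^sub>R (xs @ ys) ! i)"
      unfolding split z c d by (simp add: e_def)
    moreover have "\<forall>i<length (xs @ ys). e i \<in> \<int>"
      using c(1) d(1) by (simp add: e_def)
    ultimately show "z \<in> {\<Sum>i<length (xs @ ys). c i *\<^sub>R (xs @ ys) ! i | c. \<forall>i<length (xs @ ys). c i \<in> \<int>}"
      by blast
  next
    fix z assume "z \<in> {\<Sum>i<length (xs @ ys). c i *\<^sub>R (xs @ ys) ! i | c. \<forall>i<length (xs @ ys). c i \<in> \<int>}"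
    then obtain c where c: "\<forall>i<length (xs @ ys). c i \<in> \<int>" "z = (\<Sum>i<length (xs @ ys). c i *\<^sub>R (xs @ ys) ! i)"
      by blast
    have "(\<Sum>i<?m. c i *\<^sub>R xs ! i) \<in> X"
      using c(1) by (intro lattice_basis_memI[OF xs]) simp
    moreover have "(\<Sum>j<?k. c (?m + j) *\<^sub>R ys ! j) \<in> Y"
      using c(1) by (intro lattice_basis_memI[OF ys]) simp
    ultimately show "z \<in> X + Y"
      unfolding c(2) split by (rule set_plus_intro)
  qed
  moreover have "distinct (xs @ ys)"
    using xs ys disjoint by (simp add: lattice_basis_def)
  ultimately show ?thesis
    using indep by (simp add: lattice_basis_def)
qed

lemma is_lattice_plus:
  "is_lattice X \<Longrightarrow> is_lattice Y \<Longrightarrow> orthogonal_sets X Y \<Longrightarrow> is_lattice (X + Y)"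
  unfolding is_lattice_def using lattice_basis_append by blast

lemma dim_lattice_plus:
  "is_lattice X \<Longrightarrow> is_lattice Y \<Longrightarrow> orthogonal_sets X Y \<Longrightarrow> dim (X + Y) = dim X + dim Y"
  unfolding is_lattice_def by (metis dim_lattice_basis lattice_basis_append length_append)

lemma subset_lattice_plus:
  assumes "is_lattice X" "is_lattice Y"
  shows "X \<subseteq> X + Y" "Y \<subseteq> X + Y"
  using set_zero_plus2[OF zero_in_lattice[OF assms(2)], of X]
    set_zero_plus2[OF zero_in_lattice[OF assms(1)], of Y]
  by (simp_all add: add.commute)

lemma span_lattice_plus:
  assumes xs: "lattice_basis xs X" and ys: "lattice_basis ys Y" and XY: "orthogonal_sets X Y"
  shows "span (X + Y) = span X + span Y"
proof -
  have "span (X + Y) = span (set xs \<union> set ys)"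
    using span_lattice_basis[OF lattice_basis_append[OF xs ys XY]] by simp
  also have "\<dots> = span X + span Y"
    by (auto simp: span_Un set_plus_def span_lattice_basis[OF xs] span_lattice_basis[OF ys])
  finally show ?thesis .
qed

lemma lattice_iso_plus_dsum:
  fixes X Y :: "'a::euclidean_space set"
  assumes "is_lattice X" "is_lattice Y" and XY: "orthogonal_sets X Y"
  shows "lattice_iso (X + Y) (lattice_dsum X Y)"
proof -
  obtain xs ys where xs: "lattice_basis xs X" and ys: "lattice_basis ys Y"
    using assms(1,2) unfolding is_lattice_def by blast
  let ?S = "set xs" and ?T = "set ys"
  have "orthogonal_sets ?S ?T"
    using XY lattice_basis_set_subset[OF xs] lattice_basis_set_subset[OF ys] by (rule orthogonal_sets_mono)
  then have indep: "independent (?S \<union> ?T)" and disjoint: "?S \<inter> ?T = {}"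
    using independent_Un_orthogonal xs ys unfolding lattice_basis_def by blast+
  obtain f :: "'a \<Rightarrow> 'a \<times> 'a" where f: "linear f"
    and f_basis: "\<forall>x\<in>?S \<union> ?T. f x = (if x \<in> ?S then (x, 0) else (0, x))"
    using linear_independent_extend[OF indep, of "\<lambda>x. if x \<in> ?S then (x, 0) else (0, x)"] by blast
  have lin1: "linear (\<lambda>p::'a. (p, 0::'a))" and lin2: "linear (\<lambda>q::'a. (0::'a, q))"
    by (auto intro: linearI)
  have f1: "f p = (p, 0)" if "p \<in> span ?S" for p
    by (rule linear_eq_on_span[OF f lin1 _ that]) (simp add: f_basis)
  have f2: "f q = (0, q)" if "q \<in> span ?T" for q
    by (rule linear_eq_on_span[OF f lin2 _ that]) (use f_basis disjoint in auto)
  have f_plus: "f (p + q) = (p, q)" if "p \<in> span X" "q \<in> span Y" for p q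
    using that f1 f2 linear_add[OF f] by (simp add: span_lattice_basis[OF xs] span_lattice_basis[OF ys])
  have "norm (f z) = norm z" if z: "z \<in> span (X + Y)" for z
  proof -
    obtain p q where pq: "z = p + q" "p \<in> span X" "q \<in> span Y"
      using z span_lattice_plus[OF xs ys XY] by (auto elim: set_plus_elim)
    have "(norm (p + q))\<^sup>2 = (norm p)\<^sup>2 + (norm q)\<^sup>2"
      using orthogonal_sets_span[OF XY pq(2,3)]
      by (simp add: power2_norm_eq_inner inner_add_left inner_add_right inner_commute)
    then show ?thesis
      unfolding pq(1) f_plus[OF pq(2,3)] norm_Pair by (metis norm_ge_zero real_sqrt_unique)
  qed
  moreover have "f ` (X + Y) = X \<times> Y"
  proof -
    have "f ` (X + Y) = (\<lambda>(x, y). f (x + y)) ` (X \<times> Y)"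
      by (simp add: set_plus_image image_image case_prod_beta)
    also have "\<dots> = (\<lambda>(x, y). (x, y)) ` (X \<times> Y)"
      by (rule image_cong) (auto intro!: f_plus span_base)
    finally show ?thesis
      by simp
  qed
  ultimately show ?thesis
    unfolding lattice_iso_def lattice_dsum_def using f by blast
qed

section \<open>Splitting off indecomposable summands\<close>

lemma linear_isometry_on_inj:
  assumes "linear f" "\<forall>x\<in>span L. norm (f x) = norm x"
  shows "inj_on f (span L)"
proof (rule inj_onI)
  fix x y assume "x \<in> span L" "y \<in> span L" "f x = f y"
  then have "norm (x - y) = norm (f (x - y))"
    using assms(2) span_diff by metis
  also have "\<dots> = 0"
    using \<open>f x = f y\<close> linear_diff[OF assms(1)] by simp
  finally show "x = y"
    by simp
qed

lemma linear_isometry_on_inner: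
  assumes "linear f" "\<forall>x\<in>span L. norm (f x) = norm x" "x \<in> span L" "y \<in> span L"
  shows "inner (f x) (f y) = inner x y"
proof -
  have "norm (f (x + y)) = norm (x + y)"
    using assms(2-4) span_add by blast
  then show ?thesis
    using assms dot_norm[of "f x" "f y"] dot_norm[of x y] by (simp add: linear_add)
qed

lemma lattice_basis_isometry:
  assumes "lattice_basis bs N" "N \<subseteq> span L" "linear f" "\<forall>x\<in>span L. norm (f x) = norm x"
  shows "lattice_basis (map f bs) (f ` N)"
proof -
  have "span N \<subseteq> span L"
    using assms(2) by (rule span_minimal[OF _ subspace_span])
  then have "inj_on f (span N)"
    using linear_isometry_on_inj[OF assms(3,4)] by (rule inj_on_subset[rotated])
  then show ?thesis
    by (rule lattice_basis_map[OF assms(1,3)])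
qed

lemma lattice_iso_sym:
  assumes "lattice_iso L M"
  shows "lattice_iso M L"
proof -
  obtain f where f: "linear f" "\<forall>x\<in>span L. norm (f x) = norm x" "f ` L = M"
    using assms unfolding lattice_iso_def by blast
  obtain g where g: "linear g" "\<forall>x\<in>span L. g (f x) = x"
    using linear_exists_left_inverse_on[OF f(1) subspace_span linear_isometry_on_inj[OF f(1,2)]] by blast
  have "span M = f ` span L"
    using linear_span_image[OF f(1), of L] f(3) by simp
  then have "\<forall>y\<in>span M. norm (g y) = norm y"
    using f(2) g(2) by auto
  moreover have "g ` M = L"
  proof -
    have "g ` M = (\<lambda>x. g (f x)) ` L"
      unfolding f(3)[symmetric] image_image ..
    also have "\<dots> = (\<lambda>x. x) ` L"
      by (rule image_cong) (use g(2) span_superset in auto)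
    finally show ?thesis
      by simp
  qed
  ultimately show ?thesis
    unfolding lattice_iso_def using g(1) by blast
qed

lemma linear_image_set_plus:
  assumes "linear f"
  shows "f ` (A + B) = f ` A + f ` B"
proof (intro equalityI subsetI)
  fix y assume "y \<in> f ` (A + B)"
  then obtain a b where "y = f (a + b)" "a \<in> A" "b \<in> B"
    by (auto elim: set_plus_elim)
  then show "y \<in> f ` A + f ` B"
    by (auto simp: linear_add[OF assms])
next
  fix y assume "y \<in> f ` A + f ` B"
  then obtain a b where "y = f a + f b" "a \<in> A" "b \<in> B"
    by (auto elim: set_plus_elim)
  then show "y \<in> f ` (A + B)"
    by (auto simp: linear_add[OF assms, symmetric])
qed

lemma Times_eq_plus:
  fixes A :: "'a::comm_monoid_add set" and B :: "'b::comm_monoid_add set"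
  assumes "0 \<in> A" "0 \<in> B"
  shows "A \<times> B = A \<times> {0} + {0} \<times> B"
proof (intro equalityI subsetI)
  fix p assume "p \<in> A \<times> B"
  then have "(fst p, 0) + (0, snd p) \<in> A \<times> {0} + {0} \<times> B"
    by (intro set_plus_intro) auto
  then show "p \<in> A \<times> {0} + {0} \<times> B"
    by simp
next
  fix p assume "p \<in> A \<times> {0} + {0} \<times> B"
  then show "p \<in> A \<times> B"
    using assms by (auto elim!: set_plus_elim)
qed

lemma lattice_basis_Times_zero:
  assumes "lattice_basis ms M"
  shows "lattice_basis (map (\<lambda>m. (m, 0)) ms) (M \<times> {0::'b::euclidean_space})"
proof -
  have "lattice_basis (map (\<lambda>m. (m, 0::'b)) ms) ((\<lambda>m. (m, 0)) ` M)"
    by (rule lattice_basis_map[OF assms]) (auto intro: linearI inj_onI)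
  then show ?thesis
    by (simp add: image_Pair_const)
qed

lemma lattice_basis_zero_Times:
  assumes "lattice_basis ms M"
  shows "lattice_basis (map (Pair 0) ms) ({0::'b::euclidean_space} \<times> M)"
proof -
  have "lattice_basis (map (Pair (0::'b)) ms) (Pair 0 ` M)"
    by (rule lattice_basis_map[OF assms]) (auto intro: linearI inj_onI)
  moreover have "Pair (0::'b) ` M = {0} \<times> M"
    by auto
  ultimately show ?thesis
    by simp
qed

text \<open>Pull \<open>M1 \<times> {0}\<close> and \<open>{0} \<times> M2\<close> back along the inverse isometry.\<close>

lemma decomposable_imp_orthogonal_split:
  fixes B :: "'a::euclidean_space set"
  assumes "decomposable B"
  obtains B1 B2 where "is_lattice B1" "is_lattice B2" "orthogonal_sets B1 B2" "B = B1 + B2"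
    "B2 \<noteq> {0}" "dim B2 < dim B"
proof -
  obtain M1 M2 :: "'a set" where M1: "is_lattice M1" and M2: "is_lattice M2" "M2 \<noteq> {0}"
    and rank: "lattice_rank M2 < lattice_rank B" and iso: "lattice_iso (M1 \<times> M2) B"
    using assms lattice_iso_sym unfolding decomposable_def lattice_dsum_def by blast
  obtain g where g: "linear g" "\<forall>y\<in>span (M1 \<times> M2). norm (g y) = norm y" "g ` (M1 \<times> M2) = B"
    using iso unfolding lattice_iso_def by blast
  obtain ms1 ms2 where ms1: "lattice_basis ms1 M1" and ms2: "lattice_basis ms2 M2"
    using M1 M2(1) unfolding is_lattice_def by blast
  have sub: "M1 \<times> {0} \<subseteq> span (M1 \<times> M2)" "{0} \<times> M2 \<subseteq> span (M1 \<times> M2)"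
    using zero_in_lattice[OF M1] zero_in_lattice[OF M2(1)] by (auto intro: span_base)
  have B1: "lattice_basis (map g (map (\<lambda>m. (m, 0)) ms1)) (g ` (M1 \<times> {0}))"
    by (rule lattice_basis_isometry[OF lattice_basis_Times_zero[OF ms1] sub(1) g(1,2)])
  have B2: "lattice_basis (map g (map (Pair 0) ms2)) (g ` ({0} \<times> M2))"
    by (rule lattice_basis_isometry[OF lattice_basis_zero_Times[OF ms2] sub(2) g(1,2)])
  have "orthogonal_sets (g ` (M1 \<times> {0})) (g ` ({0} \<times> M2))"
    unfolding orthogonal_sets_def
  proof clarify
    fix a b assume "a \<in> M1" "b \<in> M2"
    then have "inner (g (a, 0)) (g (0, b)) = inner (a, 0) (0, b)"
      using sub by (intro linear_isometry_on_inner[OF g(1,2)]) auto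
    then show "inner (g (a, 0)) (g (0, b)) = 0"
      by simp
  qed
  moreover have "B = g ` (M1 \<times> {0}) + g ` ({0} \<times> M2)"
    using g(3) Times_eq_plus[OF zero_in_lattice[OF M1] zero_in_lattice[OF M2(1)]]
      linear_image_set_plus[OF g(1)] by simp
  moreover have "g ` ({0} \<times> M2) \<noteq> {0}"
    using M2(2) lattice_basis_eq_Nil_iff[OF B2] lattice_basis_eq_Nil_iff[OF ms2] by simp
  moreover have "dim (g ` ({0} \<times> M2)) < dim B"
    using rank dim_lattice_basis[OF B2] dim_lattice_basis[OF ms2] by (simp add: lattice_rank_def)
  ultimately show thesis
    using that B1 B2 unfolding is_lattice_def by blast
qed

text \<open>A nonzero orthogonal summand of minimal rank is indecomposable: a splitting of it
  would produce a smaller one.\<close>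

lemma ex_indecomposable_orthogonal_summand:
  fixes A :: "'a::euclidean_space set"
  assumes "is_lattice A" "A \<noteq> {0}"
  obtains A' B where "is_lattice A'" "is_lattice B" "orthogonal_sets A' B" "A = A' + B"
    "B \<noteq> {0}" "indecomposable B"
proof -
  define summand where "summand B \<longleftrightarrow> B \<noteq> {0} \<and> is_lattice B \<and>
      (\<exists>A'. is_lattice A' \<and> orthogonal_sets A' B \<and> A = A' + B)" for B
  have "summand A"
    using assms lattice_basis_Nil
    by (auto simp: summand_def is_lattice_def orthogonal_sets_def intro!: exI[of _ "{0}"])
  then obtain B where B: "summand B" and min: "\<And>B'. summand B' \<Longrightarrow> dim B \<le> dim B'"
    using ex_has_least_nat[of summand A dim] by blast
  then obtain A' where A': "is_lattice A'" "orthogonal_sets A' B" "A = A' + B"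
    unfolding summand_def by blast
  have "indecomposable B"
    unfolding indecomposable_def
  proof
    assume "decomposable B"
    then obtain B1 B2 where B12: "is_lattice B1" "is_lattice B2" "orthogonal_sets B1 B2" "B = B1 + B2"
      "B2 \<noteq> {0}" "dim B2 < dim B"
      by (rule decomposable_imp_orthogonal_split)
    have "B1 \<subseteq> B" "B2 \<subseteq> B"
      using subset_lattice_plus[OF B12(1,2)] B12(4) by simp_all
    then have "orthogonal_sets A' B1" "orthogonal_sets (A' + B1) B2"
      using A'(2) B12(3) by (auto intro: orthogonal_sets_plus_left elim: orthogonal_sets_mono)
    moreover have "A = (A' + B1) + B2"
      using A'(3) B12(4) by (simp add: add.assoc)
    ultimately have "summand B2"
      using A'(1) B12 is_lattice_plus unfolding summand_def by blast
    then show False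
      using min B12(6) by fastforce
  qed
  then show thesis
    using that A' B unfolding summand_def by blast
qed

definition orthogonal_list :: "'a::real_inner list \<Rightarrow> bool" where
  "orthogonal_list vs \<longleftrightarrow> (\<forall>i<length vs. \<forall>j<length vs. i \<noteq> j \<longrightarrow> inner (vs ! i) (vs ! j) = 0)"

lemma orthogonal_list_append:
  assumes "orthogonal_list xs" "orthogonal_list ys" "orthogonal_sets (set xs) (set ys)"
  shows "orthogonal_list (xs @ ys)"
  unfolding orthogonal_list_def
proof (intro allI impI)
  fix i j assume ij: "i < length (xs @ ys)" "j < length (xs @ ys)" "i \<noteq> j"
  have cross: "inner (xs ! a) (ys ! b) = 0" if "a < length xs" "b < length ys" for a b
    using assms(3) that by (simp add: orthogonal_sets_def)
  show "inner ((xs @ ys) ! i) ((xs @ ys) ! j) = 0"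
    using ij assms(1,2) cross[of i "j - length xs"] cross[of j "i - length xs"]
    by (auto simp: orthogonal_list_def nth_append inner_commute)
qed

lemma rank_one_orthogonal_summand:
  fixes L :: "'a::euclidean_space set"
  assumes rank_one: "\<And>(L1 :: 'a set) (L2 :: 'a set). is_lattice L1 \<Longrightarrow> is_lattice L2 \<Longrightarrow> L2 \<noteq> {0} \<Longrightarrow>
      indecomposable L2 \<Longrightarrow> lattice_iso L (lattice_dsum L1 L2) \<Longrightarrow> lattice_rank L2 = 1"
    and A: "is_lattice A" "A \<noteq> {0}" and C: "is_lattice C" "orthogonal_sets A C" and L: "L = A + C"
  obtains A' B v where "is_lattice A'" "lattice_basis [v] B" "orthogonal_sets A' B" "A = A' + B"
proof -
  obtain A' B where A': "is_lattice A'" and B: "is_lattice B" and A'B: "orthogonal_sets A' B" "A = A' + B"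
    and B_ne: "B \<noteq> {0}" and B_indec: "indecomposable B"
    using A by (rule ex_indecomposable_orthogonal_summand)
  have "orthogonal_sets A' C" "orthogonal_sets B C"
    using C(2) subset_lattice_plus[OF A' B] A'B(2) by (auto elim: orthogonal_sets_mono)
  then have "orthogonal_sets (A' + C) B"
    using A'B(1) orthogonal_sets_sym by (blast intro: orthogonal_sets_plus_left)
  moreover have AC: "is_lattice (A' + C)"
    using A' C(1) \<open>orthogonal_sets A' C\<close> by (rule is_lattice_plus)
  moreover have "L = (A' + C) + B"
    using L A'B(2) by (simp add: ac_simps)
  ultimately have "lattice_iso L (lattice_dsum (A' + C) B)"
    using B lattice_iso_plus_dsum by simp
  then have "lattice_rank B = 1"
    by (rule rank_one[OF AC B B_ne B_indec])
  then obtain v where "lattice_basis [v] B"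
    by (rule lattice_rank_one_basis[OF B])
  then show thesis
    using that A' A'B by blast
qed

text \<open>The complement \<open>C\<close>
  collects the rank-one summands already split off, so that the hypothesis, which only
  concerns decompositions of \<open>L\<close> itself, remains applicable.\<close>

lemma orthogonal_basis_of_summand:
  fixes L :: "'a::euclidean_space set"
  assumes rank_one: "\<And>(L1 :: 'a set) (L2 :: 'a set). is_lattice L1 \<Longrightarrow> is_lattice L2 \<Longrightarrow> L2 \<noteq> {0} \<Longrightarrow>
      indecomposable L2 \<Longrightarrow> lattice_iso L (lattice_dsum L1 L2) \<Longrightarrow> lattice_rank L2 = 1"
    and "is_lattice A" "is_lattice C" "orthogonal_sets A C" "L = A + C"
  shows "\<exists>vs. lattice_basis vs A \<and> orthogonal_list vs"
  using assms(2-)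
proof (induction "dim A" arbitrary: A C rule: less_induct)
  case less
  show ?case
  proof (cases "A = {0}")
    case True
    then show ?thesis
      using lattice_basis_Nil by (auto simp: orthogonal_list_def)
  next
    case False
    obtain A' B v where A': "is_lattice A'" and v: "lattice_basis [v] B"
      and A'B: "orthogonal_sets A' B" "A = A' + B"
      using rank_one less.prems(1) False less.prems(2-4) by (rule rank_one_orthogonal_summand)
    have B: "is_lattice B"
      using v unfolding is_lattice_def by blast
    have BC: "orthogonal_sets A' C" "orthogonal_sets B C"
      using less.prems(3) subset_lattice_plus[OF A' B] A'B(2) by (auto elim: orthogonal_sets_mono)
    have "dim A = dim A' + 1"
      using A'B dim_lattice_plus[OF A' B A'B(1)] dim_lattice_basis[OF v] by simp
    moreover have "orthogonal_sets A' (B + C)"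
      using A'B(1) BC(1) by (rule orthogonal_sets_plus_right)
    moreover have "is_lattice (B + C)"
      using B less.prems(2) BC(2) by (rule is_lattice_plus)
    moreover have "L = A' + (B + C)"
      using less.prems(4) A'B(2) by (simp add: add.assoc)
    ultimately obtain ws where ws: "lattice_basis ws A'" "orthogonal_list ws"
      using less.hyps A' by fastforce
    have "orthogonal_sets (set ws) (set [v])"
      using A'B(1) lattice_basis_set_subset[OF ws(1)] lattice_basis_set_subset[OF v]
      by (rule orthogonal_sets_mono)
    then have "orthogonal_list (ws @ [v])"
      using ws(2) by (intro orthogonal_list_append) (auto simp: orthogonal_list_def)
    moreover have "lattice_basis (ws @ [v]) A"
      using lattice_basis_append[OF ws(1) v A'B(1)] A'B(2) by simp
    ultimately show ?thesis
      by blast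
  qed
qed

section \<open>Determinants via Gram matrices\<close>

definition gram_mat :: "'a::real_inner list \<Rightarrow> real mat" where
  "gram_mat vs = mat (length vs) (length vs) (\<lambda>(i, j). inner (vs ! i) (vs ! j))"

lemma det_fin_eq_det: "det_fin d G = det (mat d d (\<lambda>(i, j). G i j))"
proof -
  have "(\<Prod>i<d. G i (p i)) = (\<Prod>i<d. mat d d (\<lambda>(i, j). G i j) $$ (i, p i))" if "p permutes {..<d}" for p
    using permutes_in_image[OF that] by (intro prod.cong) auto
  then show ?thesis
    by (simp add: det_fin_def det_def'[of _ d] atLeast0LessThan)
qed

lemma gram_mat_change_basis:
  assumes U: "U \<in> carrier_mat n n" and "length bs = n" "length vs = n"
    and bs: "\<And>j. j < n \<Longrightarrow> bs ! j = (\<Sum>i<n. U $$ (j, i) *\<^sub>R vs ! i)"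
  shows "gram_mat bs = U * gram_mat vs * transpose_mat U"
proof (rule eq_matI)
  fix j k assume "j < dim_row (U * gram_mat vs * transpose_mat U)" "k < dim_col (U * gram_mat vs * transpose_mat U)"
  then have j: "j < n" and k: "k < n"
    using U by auto
  have "(U * gram_mat vs * transpose_mat U) $$ (j, k) =
      (\<Sum>l<n. (\<Sum>i<n. U $$ (j, i) * inner (vs ! i) (vs ! l)) * U $$ (k, l))"
    using U j k assms(3) by (simp add: gram_mat_def scalar_prod_def atLeast0LessThan)
  also have "\<dots> = (\<Sum>l<n. \<Sum>i<n. U $$ (j, i) * U $$ (k, l) * inner (vs ! i) (vs ! l))"
    by (simp add: sum_distrib_left sum_distrib_right mult_ac)
  also have "\<dots> = inner (bs ! j) (bs ! k)"
    by (simp add: bs j k inner_sum_left inner_sum_right sum_distrib_left mult_ac)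
  finally show "gram_mat bs $$ (j, k) = (U * gram_mat vs * transpose_mat U) $$ (j, k)"
    using j k assms(2) by (simp add: gram_mat_def)
qed (use U assms(2) in \<open>auto simp: gram_mat_def\<close>)

lemma det_Ints:
  assumes "A \<in> carrier_mat n n" "\<And>i j. i < n \<Longrightarrow> j < n \<Longrightarrow> A $$ (i, j) \<in> \<int>"
  shows "det A \<in> \<int>"
  unfolding det_def'[OF assms(1)]
proof (intro Ints_sum Ints_mult Ints_prod)
  fix p i assume "p \<in> {p. p permutes {0..<n}}" "i \<in> {0..<n}"
  then show "A $$ (i, p i) \<in> \<int>"
    using assms(2) permutes_in_image by fastforce
qed (rule Ints_of_int)

lemma lattice_basis_coeff_mat:
  assumes "lattice_basis vs L" "set bs \<subseteq> L"
  obtains U where "U \<in> carrier_mat (length bs) (length vs)"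
    "\<And>j i. j < length bs \<Longrightarrow> i < length vs \<Longrightarrow> U $$ (j, i) \<in> \<int>"
    "\<And>j. j < length bs \<Longrightarrow> bs ! j = (\<Sum>i<length vs. U $$ (j, i) *\<^sub>R vs ! i)"
proof -
  have "\<forall>j. \<exists>c. j < length bs \<longrightarrow> (\<forall>i<length vs. c i \<in> \<int>) \<and> bs ! j = (\<Sum>i<length vs. c i *\<^sub>R vs ! i)"
    using assms lattice_basis_memE nth_mem by (metis subsetD)
  then obtain c where c: "\<And>j. j < length bs \<Longrightarrow>
      (\<forall>i<length vs. c j i \<in> \<int>) \<and> bs ! j = (\<Sum>i<length vs. c j i *\<^sub>R vs ! i)"
    by metis
  show thesis
    by (rule that[of "mat (length bs) (length vs) (\<lambda>(j, i). c j i)"]) (simp_all add: c)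
qed

text \<open>The inverse change of basis is integral as well, so \<open>det U\<close> is a unit of \<open>\<int>\<close>.\<close>

lemma det_change_of_lattice_basis:
  assumes bs: "lattice_basis bs L" and vs: "lattice_basis vs L" and n: "length vs = n"
    and U: "U \<in> carrier_mat n n" "\<And>j i. j < n \<Longrightarrow> i < n \<Longrightarrow> U $$ (j, i) \<in> \<int>"
    and bs_vs: "\<And>j. j < n \<Longrightarrow> bs ! j = (\<Sum>i<n. U $$ (j, i) *\<^sub>R vs ! i)"
  shows "\<bar>det U\<bar> = 1"
proof -
  have len_bs: "length bs = n"
    using dim_lattice_basis[OF bs] dim_lattice_basis[OF vs] n by simp
  obtain V where V: "V \<in> carrier_mat n n" "\<And>i k. i < n \<Longrightarrow> k < n \<Longrightarrow> V $$ (i, k) \<in> \<int>"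
    and vs_bs: "\<And>i. i < n \<Longrightarrow> vs ! i = (\<Sum>k<n. V $$ (i, k) *\<^sub>R bs ! k)"
    using lattice_basis_coeff_mat[OF bs lattice_basis_set_subset[OF vs]] n len_bs by metis
  have "U * V = 1\<^sub>m n"
  proof (rule eq_matI)
    fix j k assume "j < dim_row (1\<^sub>m n)" "k < dim_col (1\<^sub>m n)"
    then have j: "j < n" and k: "k < n"
      by simp_all
    have "(\<Sum>k<n. (U * V) $$ (j, k) *\<^sub>R bs ! k) = (\<Sum>k<n. \<Sum>i<n. (U $$ (j, i) * V $$ (i, k)) *\<^sub>R bs ! k)"
      using U(1) V(1) j by (simp add: scalar_prod_def atLeast0LessThan scaleR_sum_left)
    also have "\<dots> = (\<Sum>i<n. U $$ (j, i) *\<^sub>R vs ! i)"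
      by (subst sum.swap) (simp add: vs_bs scaleR_sum_right)
    also have "\<dots> = (\<Sum>k<n. (1\<^sub>m n) $$ (j, k) *\<^sub>R bs ! k)"
      using j bs_vs by (simp add: if_distrib[of "\<lambda>c. c *\<^sub>R _"] cong: if_cong)
    finally show "(U * V) $$ (j, k) = (1\<^sub>m n) $$ (j, k)"
      using independent_sum_nth_eq[of bs] bs k len_bs by (simp add: lattice_basis_def)
  qed (use U(1) V(1) in simp_all)
  then have "det U * det V = 1"
    using det_mult[OF U(1) V(1)] by simp
  moreover obtain a b where "det U = of_int a" "det V = of_int b"
    using det_Ints[OF U] det_Ints[OF V] by (metis Ints_cases)
  ultimately show ?thesis
    by (metis of_int_1 of_int_abs of_int_eq_iff of_int_mult zmult_eq_1_iff abs_1 abs_neg_one)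
qed

text \<open>\<^const>\<open>lattice_det\<close> is defined through an arbitrary (\<open>SOME\<close>) basis; every basis
  gives the same value.\<close>

lemma lattice_det_eq_sqrt_det_gram:
  assumes vs: "lattice_basis vs L"
  shows "lattice_det L = sqrt (det (gram_mat vs))"
proof (cases "L = {0}")
  case True
  then have "vs = []"
    using lattice_basis_eq_Nil_iff[OF vs] by simp
  then show ?thesis
    using True by (simp add: lattice_det_def gram_mat_def det_def'[of _ 0])
next
  case False
  define bs where "bs = (SOME bs. lattice_basis bs L)"
  have bs: "lattice_basis bs L"
    unfolding bs_def using vs by (rule someI)
  define n where "n = length vs"
  have len_bs: "length bs = n"
    using dim_lattice_basis[OF bs] dim_lattice_basis[OF vs] n_def by simp
  obtain U where U: "U \<in> carrier_mat n n" "\<And>j i. j < n \<Longrightarrow> i < n \<Longrightarrow> U $$ (j, i) \<in> \<int>"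
    and bs_vs: "\<And>j. j < n \<Longrightarrow> bs ! j = (\<Sum>i<n. U $$ (j, i) *\<^sub>R vs ! i)"
    using lattice_basis_coeff_mat[OF vs lattice_basis_set_subset[OF bs]] len_bs n_def by metis
  have G: "gram_mat vs \<in> carrier_mat n n"
    by (simp add: gram_mat_def n_def)
  have "lattice_det L = sqrt (det (gram_mat bs))"
    using False by (simp add: lattice_det_def bs_def[symmetric] det_fin_eq_det gram_mat_def)
  also have "det (gram_mat bs) = det (U * gram_mat vs * transpose_mat U)"
    by (simp add: gram_mat_change_basis[OF U(1) len_bs n_def[symmetric] bs_vs])
  also have "\<dots> = det U * det (gram_mat vs) * det U"
    using U(1) G by (simp add: det_mult[of _ n] det_transpose mult_carrier_mat[of _ n n _ n])
  also have "\<dots> = det (gram_mat vs)"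
    using det_change_of_lattice_basis[OF bs vs n_def[symmetric] U bs_vs] abs_mult_self_eq[of "det U"]
    by (simp add: mult_ac)
  finally show ?thesis .
qed

lemma det_gram_mat_orthogonal:
  assumes "orthogonal_list vs"
  shows "det (gram_mat vs) = (\<Prod>i<length vs. (norm (vs ! i))\<^sup>2)"
proof -
  have "upper_triangular (gram_mat vs)"
    using assms by (auto simp: upper_triangular_def gram_mat_def orthogonal_list_def)
  then have "det (gram_mat vs) = prod_list (diag_mat (gram_mat vs))"
    by (rule det_upper_triangular[of _ "length vs"]) (simp add: gram_mat_def)
  also have "\<dots> = (\<Prod>i<length vs. inner (vs ! i) (vs ! i))"
    by (simp add: diag_mat_def gram_mat_def prod.distinct_set_conv_list[symmetric] atLeast0LessThan)
  finally show ?thesis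
    by (simp add: power2_norm_eq_inner)
qed

lemma lattice_det_orthogonal_basis:
  assumes "lattice_basis vs L" "orthogonal_list vs"
  shows "lattice_det L = (\<Prod>i<length vs. norm (vs ! i))"
  using lattice_det_eq_sqrt_det_gram[OF assms(1)] det_gram_mat_orthogonal[OF assms(2)]
  by (simp add: prod_power_distrib[symmetric] prod_nonneg)

section \<open>Stable lattices with an orthogonal basis\<close>

lemma lattice_basis_singleton:
  assumes "v \<noteq> 0"
  shows "lattice_basis [v] {k *\<^sub>R v | k. k \<in> \<int>}"
proof -
  have "{\<Sum>i<length [v]. c i *\<^sub>R [v] ! i | c. \<forall>i<length [v]. c i \<in> \<int>} = {k *\<^sub>R v | k. k \<in> \<int>}"
  proof (intro equalityI subsetI)
    fix x assume "x \<in> {\<Sum>i<length [v]. c i *\<^sub>R [v] ! i | c. \<forall>i<length [v]. c i \<in> \<int>}"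
    then show "x \<in> {k *\<^sub>R v | k. k \<in> \<int>}"
      by auto
  next
    fix x assume "x \<in> {k *\<^sub>R v | k. k \<in> \<int>}"
    then obtain k where "k \<in> \<int>" "x = k *\<^sub>R v"
      by blast
    then show "x \<in> {\<Sum>i<length [v]. c i *\<^sub>R [v] ! i | c. \<forall>i<length [v]. c i \<in> \<int>}"
      by (auto intro!: exI[of _ "\<lambda>_. k"])
  qed
  then show ?thesis
    using assms by (simp add: lattice_basis_def)
qed

text \<open>The line spanned by a basis vector is a sublattice whose determinant is the norm of
  that vector.\<close>

lemma stable_lattice_basis_norm_ge_1:
  assumes L: "stable_lattice L" and bs: "lattice_basis bs L" and i: "i < length bs"
  shows "1 \<le> norm (bs ! i)"
proof -
  define N where "N = {k *\<^sub>R bs ! i | k. k \<in> \<int>}"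
  have "bs ! i \<noteq> 0"
    using bs i dependent_zero nth_mem unfolding lattice_basis_def by metis
  then have N: "lattice_basis [bs ! i] N"
    unfolding N_def by (rule lattice_basis_singleton)
  have "N \<subseteq> L"
    unfolding N_def using lattice_basis_scaleR_nth_mem[OF bs i] by blast
  then have "1 \<le> lattice_det N"
    using L additive_subgroup_lattice[OF N] unfolding stable_lattice_def by blast
  also have "lattice_det N = norm (bs ! i)"
    using lattice_det_orthogonal_basis[OF N] by (simp add: orthogonal_list_def)
  finally show ?thesis .
qed

lemma stable_lattice_orthogonal_basis_norm:
  assumes L: "stable_lattice L" and vs: "lattice_basis vs L" "orthogonal_list vs" and i: "i < length vs"
  shows "norm (vs ! i) = 1"
proof -
  have ge1: "1 \<le> norm (vs ! j)" if "j < length vs" for j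
    using stable_lattice_basis_norm_ge_1[OF L vs(1) that] .
  have "norm (vs ! i) * 1 \<le> norm (vs ! i) * (\<Prod>j\<in>{..<length vs} - {i}. norm (vs ! j))"
    using ge1 by (intro mult_left_mono prod_ge_1) auto
  also have "\<dots> = lattice_det L"
    using lattice_det_orthogonal_basis[OF vs] i by (simp add: prod.remove)
  also have "\<dots> = 1"
    using L by (simp add: stable_lattice_def)
  finally show ?thesis
    using ge1[OF i] by simp
qed

section \<open>Orthonormal bases and the integer lattice\<close>

definition orthonormal_list :: "'a::real_inner list \<Rightarrow> bool" where
  "orthonormal_list vs \<longleftrightarrow>
     (\<forall>i<length vs. \<forall>j<length vs. inner (vs ! i) (vs ! j) = (if i = j then 1 else 0))"

lemma orthonormal_listI:
  "orthogonal_list vs \<Longrightarrow> (\<And>i. i < length vs \<Longrightarrow> norm (vs ! i) = 1) \<Longrightarrow> orthonormal_list vs"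
  by (simp add: orthonormal_list_def orthogonal_list_def norm_eq_1)

lemma inner_sum_orthonormal_list:
  assumes "orthonormal_list vs" "i < length vs"
  shows "inner (\<Sum>j<length vs. c j *\<^sub>R vs ! j) (vs ! i) = c i"
  using assms by (simp add: orthonormal_list_def inner_sum_left if_distrib[of "\<lambda>x. _ * x"] cong: if_cong)

lemma norm_sum_orthonormal_list:
  assumes "orthonormal_list vs"
  shows "(norm (\<Sum>j<length vs. c j *\<^sub>R vs ! j))\<^sup>2 = (\<Sum>j<length vs. (c j)\<^sup>2)"
proof -
  have "inner (\<Sum>j<length vs. c j *\<^sub>R vs ! j) (\<Sum>j<length vs. c j *\<^sub>R vs ! j) =
      (\<Sum>j<length vs. c j * inner (vs ! j) (\<Sum>j<length vs. c j *\<^sub>R vs ! j))"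
    by (simp add: inner_sum_left)
  also have "\<dots> = (\<Sum>j<length vs. (c j)\<^sup>2)"
    using inner_sum_orthonormal_list[OF assms] by (simp add: inner_commute power2_eq_square)
  finally show ?thesis
    by (simp add: power2_norm_eq_inner)
qed

lemma lattice_iso_orthonormal_bases:
  fixes L :: "'a::euclidean_space set" and M :: "'b::euclidean_space set"
  assumes vs: "lattice_basis vs L" "orthonormal_list vs"
    and ws: "lattice_basis ws M" "orthonormal_list ws" and len: "length ws = length vs"
  shows "lattice_iso L M"
proof -
  define f where "f x = (\<Sum>i<length vs. inner x (vs ! i) *\<^sub>R ws ! i)" for x
  have "linear f"
    unfolding f_def by (rule linearI) (simp_all add: inner_add_left scaleR_add_left sum.distrib scaleR_sum_right)
  have f_sum: "f (\<Sum>i<length vs. c i *\<^sub>R vs ! i) = (\<Sum>i<length vs. c i *\<^sub>R ws ! i)" for c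
    unfolding f_def using inner_sum_orthonormal_list[OF vs(2)] by simp
  have "norm (f x) = norm x" if x: "x \<in> span L" for x
  proof -
    have "distinct vs" "x \<in> span (set vs)"
      using vs(1) x span_lattice_basis[OF vs(1)] by (simp_all add: lattice_basis_def)
    then obtain c where "x = (\<Sum>i<length vs. c i *\<^sub>R vs ! i)"
      by (rule sum_nth_if_in_span)
    then have "(norm (f x))\<^sup>2 = (norm x)\<^sup>2"
      using norm_sum_orthonormal_list[OF vs(2)] norm_sum_orthonormal_list[OF ws(2)] len
      by (simp add: f_sum)
    then show ?thesis
      by simp
  qed
  moreover have "f ` L = M"
  proof (intro equalityI subsetI)
    fix y assume "y \<in> f ` L"
    then obtain x where x: "x \<in> L" "y = f x"
      by blast
    obtain c where "\<forall>i<length vs. c i \<in> \<int>" "x = (\<Sum>i<length vs. c i *\<^sub>R vs ! i)"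
      by (rule lattice_basis_memE[OF vs(1) x(1)])
    then show "y \<in> M"
      using lattice_basis_memI[OF ws(1), of c] len x(2) by (simp add: f_sum)
  next
    fix y assume "y \<in> M"
    then obtain c where c: "\<forall>i<length ws. c i \<in> \<int>" "y = (\<Sum>i<length ws. c i *\<^sub>R ws ! i)"
      by (rule lattice_basis_memE[OF ws(1)])
    then have "y = f (\<Sum>i<length vs. c i *\<^sub>R vs ! i)"
      by (simp add: f_sum len)
    moreover have "(\<Sum>i<length vs. c i *\<^sub>R vs ! i) \<in> L"
      using lattice_basis_memI[OF vs(1)] c(1) len by simp
    ultimately show "y \<in> f ` L"
      by blast
  qed
  ultimately show ?thesis
    unfolding lattice_iso_def using \<open>linear f\<close> by blast
qed

lemma int_lattice_iff_inner_Basis: "x \<in> int_lattice \<longleftrightarrow> (\<forall>b\<in>Basis. inner x b \<in> \<int>)"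
  unfolding int_lattice_def mem_Collect_eq cart_eq_inner_axis
proof
  assume "\<forall>i. inner x (axis i 1) \<in> \<int>"
  then show "\<forall>b\<in>Basis. inner x b \<in> \<int>"
    using axis_inverse by metis
qed simp

lemma int_lattice_orthonormal_basis:
  obtains es :: "(real^'n) list"
  where "lattice_basis es int_lattice" "orthonormal_list es" "length es = CARD('n)"
proof -
  obtain es :: "(real^'n) list" where es: "distinct es" "set es = Basis"
    using finite_distinct_list[OF finite_Basis] by blast
  have es_Basis: "es ! i \<in> Basis" if "i < length es" for i
    using nth_mem[OF that] es(2) by simp
  have bij: "bij_betw ((!) es) {..<length es} Basis"
    using bij_betw_nth[OF es(1) refl refl] es(2) by simp
  have "int_lattice = {\<Sum>i<length es. c i *\<^sub>R es ! i | c. \<forall>i<length es. c i \<in> \<int>}"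
  proof (intro equalityI subsetI)
    fix x :: "real^'n" assume "x \<in> int_lattice"
    have "x = (\<Sum>b\<in>Basis. inner x b *\<^sub>R b)"
      by (simp add: euclidean_representation)
    also have "\<dots> = (\<Sum>i<length es. inner x (es ! i) *\<^sub>R es ! i)"
      by (rule sum.reindex_bij_betw[OF bij, symmetric])
    finally have x: "x = (\<Sum>i<length es. inner x (es ! i) *\<^sub>R es ! i)" .
    have "\<forall>i<length es. inner x (es ! i) \<in> \<int>"
      using \<open>x \<in> int_lattice\<close> by (simp add: int_lattice_iff_inner_Basis es(2)[symmetric])
    with x show "x \<in> {\<Sum>i<length es. c i *\<^sub>R es ! i | c. \<forall>i<length es. c i \<in> \<int>}"
      by (intro CollectI exI[of _ "\<lambda>i. inner x (es ! i)"]) simp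
  next
    fix y :: "real^'n" assume "y \<in> {\<Sum>i<length es. c i *\<^sub>R es ! i | c. \<forall>i<length es. c i \<in> \<int>}"
    then obtain c where c: "\<forall>i<length es. c i \<in> \<int>" "y = (\<Sum>i<length es. c i *\<^sub>R es ! i)"
      by blast
    have "inner y b \<in> \<int>" if "b \<in> Basis" for b
      unfolding c(2) inner_sum_left
      using c(1) that by (intro Ints_sum Ints_mult) (auto simp: inner_Basis es_Basis)
    then show "y \<in> int_lattice"
      unfolding int_lattice_iff_inner_Basis by blast
  qed
  moreover have "orthonormal_list es"
    using es(1) by (auto simp: orthonormal_list_def inner_Basis es_Basis nth_eq_iff_index_eq)
  moreover have "length es = CARD('n)"
    using distinct_card[OF es(1)] es(2) by simp
  ultimately show thesis
    using es independent_Basis by (intro that[of es]) (simp_all add: lattice_basis_def)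
qed

theorem corollary2p4:
  fixes L :: "(real^'n) set"
  assumes "is_lattice L"
    and "lattice_rank L = CARD('n)"
    and "stable_lattice L"
    and "\<forall>(L1::(real^'n) set) (L2::(real^'n) set). is_lattice L1 \<and> is_lattice L2 \<and> L2 \<noteq> {0} \<and>
           indecomposable L2 \<and> lattice_iso L (lattice_dsum L1 L2) \<longrightarrow> lattice_rank L2 = 1"
  shows "lattice_iso L (int_lattice :: (real^'n) set)"
proof -
  have "\<exists>vs. lattice_basis vs L \<and> orthogonal_list vs"
  proof (rule orthogonal_basis_of_summand)
    show "is_lattice {0::real^'n}" "orthogonal_sets L {0}" "L = L + {0}"
      using lattice_basis_Nil by (auto simp: is_lattice_def orthogonal_sets_def)
  qed (use assms(1,4) in blast)+
  then obtain vs where vs: "lattice_basis vs L" "orthogonal_list vs"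
    by blast
  have "orthonormal_list vs"
    using vs(2) stable_lattice_orthogonal_basis_norm[OF assms(3) vs] by (rule orthonormal_listI)
  moreover obtain es :: "(real^'n) list"
    where "lattice_basis es int_lattice" "orthonormal_list es" "length es = CARD('n)"
    by (rule int_lattice_orthonormal_basis)
  moreover have "length vs = CARD('n)"
    using dim_lattice_basis[OF vs(1)] assms(2) by (simp add: lattice_rank_def)
  ultimately show ?thesis
    using lattice_iso_orthonormal_bases[OF vs(1)] by simp
qed

end
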